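(* Let $n\geq 4$ be even and let $f:(\mathbb{P}(\mathbb{R}^n))^{n+1}\to\mathbb{R}_\varepsilon$ be a non-zero $\mathrm{GL}_n(\mathbb{R})$-equivariant map. Then $df$ does not vanish everywhere on $(\mathbb{P}(\mathbb{R}^n))^{n+2}$. (For $n=2$ this conclusion fails.)
   Context: $\mathbb{R}_\varepsilon$ is $\mathbb{R}$ with $g\in\mathrm{GL}_n(\mathbb{R})$ acting by $\operatorname{sign}\det g$; equivariance means $f(gx_0,\dots,gx_n)=\operatorname{sign}(\det g)f(x_0,\dots,x_n)$. The coboundary is $df(x_0,\dots,x_{n+1})=\sum_{i=0}^{n+1}(-1)^if(x_0,\dots,\widehat{x_i},\dots,x_{n+1})$. *)

theory Defs
  imports "HOL-Analysis.Analysis"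
begin

definition proj_point :: "(real^'n) set \<Rightarrow> bool" where
  "proj_point L \<longleftrightarrow> (\<exists>v. v \<noteq> 0 \<and> L = span {v})"

definition proj_tuples :: "nat \<Rightarrow> (real^'n) set list set" where
  "proj_tuples k = {xs. length xs = k \<and> (\<forall>L\<in>set xs. proj_point L)}"

definition act_line :: "real^'n^'n \<Rightarrow> (real^'n) set \<Rightarrow> (real^'n) set" where
  "act_line g L = (\<lambda>v. g *v v) ` L"

text \<open>GL_n(R)-equivariance into R_epsilon (g acts by sign det g) on (P(R^n))^k.\<close>
definition equivariant_eps :: "nat \<Rightarrow> ((real^'n) set list \<Rightarrow> real) \<Rightarrow> bool" where
  "equivariant_eps k f \<longleftrightarrow>
     (\<forall>g::real^'n^'n. invertible g \<longrightarrow>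
        (\<forall>xs\<in>proj_tuples k. f (map (act_line g) xs) = sgn (det g) * f xs))"

definition omit :: "nat \<Rightarrow> 'a list \<Rightarrow> 'a list" where
  "omit i xs = take i xs @ drop (Suc i) xs"

definition cobound :: "('a list \<Rightarrow> real) \<Rightarrow> 'a list \<Rightarrow> real" where
  "cobound f xs = (\<Sum>i<length xs. (-1) ^ i * f (omit i xs))"

end

theory Submission
  imports Defs
begin

(*
  Let f be a GL_n(R)-equivariant map (P(R^n))^(n+1) -> R_eps with f(y) <> 0, y = ([v_0],...,[v_n]).

  Key observation: if all entries of a tuple are lines fixed by a reflection g (a map fixing a
  hyperplane pointwise and negating a complementary line, so det g = -1), then equivariance gives
  f = sgn(det g) f = -f, so f vanishes there.  Applied to y this shows
    (a) v_1,...,v_n form a basis of R^n (otherwise a reflection fixes all of y), and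
    (b) in this basis v_0 has all coordinates c_j = r_j . v_0 nonzero (r_j the dual basis).
  Put w = c_1 v_1 + c_2 v_2 and x = (y, [w]).  Every face of x omitting one of the first n+1
  entries is again fixed by a suitable reflection (this needs n >= 3), so in the coboundary only
  the last face survives and (df)(x) = +-f(y) <> 0.
*)

definition outer :: "real^'n \<Rightarrow> real^'n \<Rightarrow> real^'n^'n" where
  "outer u w = (\<chi> i j. u$i * w$j)"

lemma outer_mult_right: "outer u w ** B = outer u (transpose B *v w)"
  by (simp add: outer_def matrix_matrix_mult_def matrix_vector_mult_def transpose_def
      vec_eq_iff sum_distrib_left algebra_simps)

lemma mult_outer_left: "B ** outer u w = outer (B *v u) w"
  by (simp add: outer_def matrix_matrix_mult_def matrix_vector_mult_def vec_eq_iff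
      sum_distrib_right mult.assoc)

lemma outer_mult_vector: "outer u w *v v = (w \<bullet> v) *\<^sub>R u"
  by (simp add: outer_def matrix_vector_mult_def inner_vec_def vec_eq_iff
      sum_distrib_left mult.assoc mult.commute mult.left_commute)

text \<open>Transposed, \<open>I + e\<^sub>k w\<^sup>T\<close> is the identity with column \<open>k\<close> replaced by \<open>e\<^sub>k + w\<close>;
  Cramer's lemma evaluates its determinant.\<close>

lemma det_plus_outer_axis:
  fixes w :: "real^'n"
  shows "det (mat 1 + outer (axis k 1) w) = 1 + w$k"
proof -
  have "det (mat 1 + outer (axis k 1) w) = det (transpose (mat 1 + outer (axis k 1) w))"
    by (rule det_transpose[symmetric])
  also have "transpose (mat 1 + outer (axis k 1) w) =
        (\<chi> i j. if j = k then (mat 1 *v (axis k 1 + w))$i else mat 1$i$j)"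
    unfolding matrix_vector_mul_lid
    by (auto simp: transpose_def outer_def mat_def axis_def vec_eq_iff)
  also have "det \<dots> = (axis k 1 + w)$k * det (mat 1 :: real^'n^'n)"
    by (rule cramer_lemma)
  finally show ?thesis by simp
qed

lemma matrix_add_rdistrib: "((A + B) ** C) = (A ** C) + (B ** C)"
  by (simp add: matrix_matrix_mult_def vec_eq_iff sum.distrib algebra_simps)

text \<open>Matrix determinant lemma \<open>det (I + u w\<^sup>T) = 1 + w\<cdot>u\<close>: if \<open>u$k \<noteq> 0\<close>, conjugating by the
  matrix \<open>C\<close> (identity with column \<open>k\<close> replaced by \<open>u\<close>, so \<open>C e\<^sub>k = u\<close>) reduces to the
  case \<open>u = e\<^sub>k\<close>.\<close>

lemma det_plus_outer:
  fixes u w :: "real^'n"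
  shows "det (mat 1 + outer u w) = 1 + w \<bullet> u"
proof (cases "u = 0")
  case True
  then show ?thesis by (simp add: outer_def zero_vec_def[symmetric])
next
  case False
  then obtain k where uk: "u$k \<noteq> 0" by (metis vec_eq_iff zero_index)
  define C :: "real^'n^'n" where "C = (\<chi> i j. if j = k then u$i else mat 1$i$j)"
  define w' where "w' = transpose C *v w"
  have detC: "det C = u$k"
    using cramer_lemma[of k "mat 1" u] unfolding matrix_vector_mul_lid by (simp add: C_def)
  have Cu: "C *v axis k 1 = u"
    by (simp add: C_def matrix_vector_mult_basis column_def vec_eq_iff)
  have w'k: "w'$k = w \<bullet> u"
    by (simp add: w'_def C_def matrix_vector_mult_def transpose_def inner_vec_def mult.commute)
  have "(mat 1 + outer u w) ** C = C + outer u w'"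
    by (simp add: matrix_add_rdistrib outer_mult_right w'_def)
  also have "\<dots> = C ** (mat 1 + outer (axis k 1) w')"
    by (simp add: matrix_add_ldistrib mult_outer_left Cu)
  finally have "det (mat 1 + outer u w) * det C = det C * det (mat 1 + outer (axis k 1) w')"
    using arg_cong[where f=det] by (metis det_mul)
  then show ?thesis
    using uk by (simp add: detC det_plus_outer_axis w'k)
qed

text \<open>The reflection in the hyperplane \<open>q\<^sup>\<perp>\<close> along \<open>p\<close> (meaningful when \<open>q\<cdot>p \<noteq> 0\<close>):
  it fixes \<open>q\<^sup>\<perp>\<close> pointwise and sends \<open>p\<close> to \<open>-p\<close>.\<close>

definition reflection :: "real^'n \<Rightarrow> real^'n \<Rightarrow> real^'n^'n" where
  "reflection q p = mat 1 + outer (- (2 / (q \<bullet> p)) *\<^sub>R p) q"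

lemma reflection_apply:
  "reflection q p *v v = v - (2 * (q \<bullet> v) / (q \<bullet> p)) *\<^sub>R p"
  by (simp add: reflection_def matrix_vector_mult_add_rdistrib outer_mult_vector)

lemma det_reflection:
  assumes "q \<bullet> p \<noteq> 0"
  shows "det (reflection q p) = -1"
  using assms by (simp add: reflection_def det_plus_outer inner_commute)

abbreviation lines :: "(real^'n) list \<Rightarrow> (real^'n) set list" where
  "lines vs \<equiv> map (\<lambda>v. span {v}) vs"

lemma lines_in_proj_tuples:
  assumes "length vs = m" "0 \<notin> set vs"
  shows "lines vs \<in> proj_tuples m"
proof -
  have "proj_point (span {v})" if "v \<in> set vs" for v
    using that assms(2) unfolding proj_point_def by metis
  then show ?thesis by (auto simp: proj_tuples_def assms(1))
qed

lemma act_line_span: "act_line g (span {v}) = span {g *v v}"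
  using span_linear_image[OF matrix_vector_mul_linear, of g "{v}"] by (simp add: act_line_def)

lemma span_uminus_singleton: "span {- v} = span {v}"
proof -
  have "span {- w} \<subseteq> span {w}" for w :: "'a::real_vector"
    by (intro span_minimal) (auto intro: span_neg span_base simp: subspace_span)
  from this[of v] this[of "- v"] show ?thesis by auto
qed

lemma reflection_fixes_line:
  assumes "q \<bullet> p \<noteq> 0" "q \<bullet> v = 0 \<or> v = p"
  shows "act_line (reflection q p) (span {v}) = span {v}"
proof (cases "q \<bullet> v = 0")
  case True
  then show ?thesis by (simp add: act_line_span reflection_apply)
next
  case False
  then have "reflection q p *v v = - v"
    using assms by (simp add: reflection_apply algebra_simps scaleR_2)
  then show ?thesis by (simp add: act_line_span span_uminus_singleton)
qed

text \<open>Key lemma: an equivariant map vanishes on every tuple whose entries are all fixed by one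
  reflection, since there \<open>f = sgn (det g) * f = - f\<close>.\<close>

lemma equivariant_vanishes_if_reflection_fixed:
  assumes f: "equivariant_eps m f" and vs: "length vs = m" "0 \<notin> set vs"
    and qp: "q \<bullet> p \<noteq> 0" and fixed: "\<forall>v\<in>set vs. q \<bullet> v = 0 \<or> v = p"
  shows "f (lines vs) = 0"
proof -
  let ?g = "reflection q p"
  have "map (act_line ?g) (lines vs) = lines vs"
    using fixed qp by (auto simp: reflection_fixes_line)
  moreover have "invertible ?g"
    using det_reflection[OF qp] by (simp add: invertible_det_nz)
  ultimately have "f (lines vs) = sgn (det ?g) * f (lines vs)"
    using f lines_in_proj_tuples[OF vs] unfolding equivariant_eps_def by metis
  then show ?thesis using det_reflection[OF qp] by simp
qed

lemma proj_tuples_lines: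
  assumes "xs \<in> proj_tuples m"
  obtains vs where "xs = lines vs" "length vs = m" "0 \<notin> set vs"
proof -
  define vs where "vs = map (\<lambda>L. SOME v. v \<noteq> 0 \<and> L = span {v}) xs"
  have "\<forall>L\<in>set xs. \<exists>v. v \<noteq> 0 \<and> L = span {v}"
    using assms by (simp add: proj_tuples_def proj_point_def)
  then have "\<forall>L\<in>set xs. (SOME v. v \<noteq> 0 \<and> L = span {v}) \<noteq> 0 \<and>
                        L = span {SOME v. v \<noteq> 0 \<and> L = span {v}}"
    by (metis (mono_tags, lifting) someI_ex)
  then have "xs = lines vs" "0 \<notin> set vs"
    by (auto simp: vs_def intro: map_idI[symmetric])
  moreover have "length vs = m"
    using assms by (simp add: vs_def proj_tuples_def)
  ultimately show ?thesis using that by blast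
qed

lemma length_omit: "i < length xs \<Longrightarrow> length (omit i xs) = length xs - 1"
  by (simp add: omit_def)

lemma omit_map: "omit i (map g xs) = map g (omit i xs)"
  by (simp add: omit_def take_map drop_map)

lemma omit_last: "omit (length xs) (xs @ [y]) = xs"
  by (simp add: omit_def)

lemma set_omit: "set (omit i xs) \<subseteq> {xs!j | j. j < length xs \<and> j \<noteq> i}"
proof
  fix x assume "x \<in> set (omit i xs)"
  then consider "x \<in> set (take i xs)" | "x \<in> set (drop (Suc i) xs)"
    unfolding omit_def by auto
  then show "x \<in> {xs!j | j. j < length xs \<and> j \<noteq> i}"
  proof cases
    case 1
    then obtain j where "j < length (take i xs)" "x = take i xs ! j"
      by (auto simp: in_set_conv_nth)
    then show ?thesis by auto
  next
    case 2
    then obtain j where "j < length (drop (Suc i) xs)" "x = drop (Suc i) xs ! j"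
      by (auto simp: in_set_conv_nth)
    then show ?thesis by (intro CollectI exI[of _ "Suc i + j"]) auto
  qed
qed

lemma nth_in_set_omit:
  assumes "k < length xs" "k \<noteq> i"
  shows "xs!k \<in> set (omit i xs)"
proof (cases "k < i")
  case True
  then have "xs!k \<in> set (take i xs)"
    using assms(1) by (metis in_set_conv_nth length_take min_less_iff_conj nth_take)
  then show ?thesis by (simp add: omit_def)
next
  case False
  then have "xs!k = drop (Suc i) xs ! (k - Suc i)" "k - Suc i < length (drop (Suc i) xs)"
    using assms by auto
  then have "xs!k \<in> set (drop (Suc i) xs)" by (metis nth_mem)
  then show ?thesis by (simp add: omit_def)
qed

lemma omit_set_subset: "set (omit i xs) \<subseteq> set xs"
  by (auto simp: omit_def dest: in_set_takeD in_set_dropD)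

lemma cobound_only_last_face:
  assumes "length xs = Suc m" "\<forall>i<m. f (omit i xs) = 0"
  shows "cobound f xs = (-1) ^ m * f (omit m xs)"
  using assms by (simp add: cobound_def)

text \<open>If \<open>n\<close> vectors in \<open>R\<^sup>n\<close> have no common nonzero orthogonal vector, they admit a dual
  family \<open>r\<close>: for each \<open>j\<close>, the other \<open>n - 1\<close> vectors span a proper subspace, and a vector
  orthogonal to it, normalized against the \<open>j\<close>-th vector, is \<open>r j\<close>.\<close>

lemma dual_family:
  fixes us :: "(real^'n) list"
  assumes len: "length us = CARD('n)"
    and spanning: "\<And>r. (\<forall>v\<in>set us. r \<bullet> v = 0) \<Longrightarrow> r = 0"
  obtains r where "\<forall>j<CARD('n). \<forall>k<CARD('n). r j \<bullet> us!k = (if j = k then 1 else 0)"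
proof -
  have "\<exists>r. \<forall>k<CARD('n). r \<bullet> us!k = (if j = k then 1 else 0)" if j: "j < CARD('n)" for j
  proof -
    let ?S = "set (omit j us)"
    have "dim ?S \<le> card ?S" by (rule dim_le_card') simp
    also have "\<dots> \<le> length (omit j us)" by (rule card_length)
    also have "\<dots> < DIM(real^'n)" using j len by (simp add: length_omit)
    finally obtain x where x: "x \<noteq> 0" "\<And>y. y \<in> span ?S \<Longrightarrow> orthogonal x y"
      using orthogonal_to_subspace_exists by blast
    have others: "x \<bullet> us!k = 0" if "k < CARD('n)" "k \<noteq> j" for k
    proof -
      have "us!k \<in> ?S"
        using that len by (simp add: nth_in_set_omit)
      then show ?thesis using x(2) span_base by (auto simp: orthogonal_def)
    qed
    have "x \<bullet> us!j \<noteq> 0"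
    proof
      assume "x \<bullet> us!j = 0"
      then have "\<forall>v\<in>set us. x \<bullet> v = 0"
        using others len by (metis in_set_conv_nth)
      then show False using spanning x(1) by blast
    qed
    then show ?thesis
      using others by (intro exI[of _ "x /\<^sub>R (x \<bullet> us!j)"]) auto
  qed
  then show ?thesis using that by metis
qed

text \<open>Fact (a): if \<open>f\<close> does not vanish at \<open>lines (v\<^sub>0 # us)\<close>, no nonzero \<open>r\<close> is orthogonal
  to all entries \<open>u\<^sub>k\<close> of \<open>us\<close>; otherwise the reflection in \<open>r\<^sup>\<perp>\<close> along \<open>r\<close> or along \<open>v\<^sub>0\<close> fixes the tuple.\<close>

lemma nonvanishing_spanning:
  assumes f: "equivariant_eps (Suc (length us)) f"
    and nz: "0 \<notin> set (v0 # us)" and fy: "f (lines (v0 # us)) \<noteq> 0"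
    and r: "\<forall>v\<in>set us. r \<bullet> v = 0"
  shows "r = 0"
proof (rule ccontr)
  assume "r \<noteq> 0"
  define p where "p = (if r \<bullet> v0 = 0 then r else v0)"
  have "r \<bullet> p \<noteq> 0" using \<open>r \<noteq> 0\<close> by (simp add: p_def)
  moreover have "\<forall>v\<in>set (v0 # us). r \<bullet> v = 0 \<or> v = p"
    using r by (simp add: p_def)
  ultimately have "f (lines (v0 # us)) = 0"
    using equivariant_vanishes_if_reflection_fixed[OF f _ nz] by simp
  with fy show False by contradiction
qed

text \<open>Fact (b): in the basis \<open>u\<^sub>k\<close>, all coordinates \<open>r\<^sub>j \<cdot> v\<^sub>0\<close> of \<open>v\<^sub>0\<close> are nonzero; otherwise the
  reflection in \<open>r\<^sub>j\<^sup>\<perp>\<close> along \<open>u\<^sub>j\<close> fixes the tuple.\<close>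

lemma nonvanishing_coordinate:
  assumes f: "equivariant_eps (Suc (length us)) f"
    and nz: "0 \<notin> set (v0 # us)" and fy: "f (lines (v0 # us)) \<noteq> 0"
    and j: "j < length us" and dual: "\<forall>k<length us. r \<bullet> us!k = (if j = k then 1 else 0)"
  shows "r \<bullet> v0 \<noteq> 0"
proof
  assume "r \<bullet> v0 = 0"
  then have "\<forall>v\<in>set (v0 # us). r \<bullet> v = 0 \<or> v = us!j"
    using dual by (auto simp: in_set_conv_nth)
  moreover have "r \<bullet> us!j \<noteq> 0" using dual j by simp
  ultimately have "f (lines (v0 # us)) = 0"
    using equivariant_vanishes_if_reflection_fixed[OF f _ nz] by simp
  with fy show False by contradiction
qed

lemma entries_of_face:
  assumes "length us = N"
    and "i \<noteq> 0 \<Longrightarrow> P v0" and "\<And>k. k < N \<Longrightarrow> Suc k \<noteq> i \<Longrightarrow> P (us!k)" and "P w"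
  shows "\<forall>v\<in>set (omit i (v0 # us @ [w])). P v"
proof
  fix v assume "v \<in> set (omit i (v0 # us @ [w]))"
  then obtain j where j: "j < N + 2" "j \<noteq> i" "v = (v0 # us @ [w]) ! j"
    using set_omit assms(1) by fastforce
  show "P v"
  proof (cases j)
    case 0 then show ?thesis using j assms(2) by simp
  next
    case (Suc k)
    then show ?thesis using j assms by (cases "k < N") (auto simp: nth_append)
  qed
qed

lemma extension_vector_nonzero:
  fixes us :: "(real^'n) list" and r :: "nat \<Rightarrow> real^'n"
  assumes "2 \<le> N" and dual: "\<forall>j<N. \<forall>k<N. r j \<bullet> us!k = (if j = k then 1 else 0)"
    and coord: "\<forall>j<N. r j \<bullet> v0 \<noteq> 0"
  shows "(r 0 \<bullet> v0) *\<^sub>R us!0 + (r 1 \<bullet> v0) *\<^sub>R us!1 \<noteq> 0"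
proof
  assume "(r 0 \<bullet> v0) *\<^sub>R us!0 + (r 1 \<bullet> v0) *\<^sub>R us!1 = 0"
  then have "r 0 \<bullet> ((r 0 \<bullet> v0) *\<^sub>R us!0 + (r 1 \<bullet> v0) *\<^sub>R us!1) = 0" by simp
  then show False using assms by (simp add: inner_add_right)
qed

text \<open>Each face of \<open>v\<^sub>0 # us @ [w]\<close>, \<open>us = [u\<^sub>0, ..., u\<^sub>N\<^sub>-\<^sub>1]\<close>, omitting one of the first \<open>N + 1\<close> entries is
  fixed by a reflection, hence \<open>f\<close> vanishes on it:
  omitting \<open>v\<^sub>0\<close>: reflect in \<open>r\<^sub>2\<^sup>\<perp>\<close> along \<open>u\<^sub>2\<close> (needs \<open>N \<ge> 3\<close>);
  omitting \<open>u\<^sub>0\<close> or \<open>u\<^sub>1\<close>: reflect in \<open>(c\<^sub>0 r\<^sub>1 - c\<^sub>1 r\<^sub>0)\<^sup>\<perp>\<close>, which contains \<open>v\<^sub>0\<close> and \<open>w\<close>,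
    along the remaining one of \<open>u\<^sub>0, u\<^sub>1\<close>;
  omitting \<open>u\<^sub>k\<close>, \<open>k \<ge> 2\<close>: reflect in \<open>r\<^sub>k\<^sup>\<perp>\<close>, which contains \<open>w\<close>, along \<open>v\<^sub>0\<close>.\<close>

lemma faces_vanish:
  fixes us :: "(real^'n) list" and r :: "nat \<Rightarrow> real^'n"
  assumes f: "equivariant_eps (N + 1) f" and len: "length us = N" and three: "3 \<le> N"
    and nz: "0 \<notin> set (v0 # us)"
    and dual: "\<forall>j<N. \<forall>k<N. r j \<bullet> us!k = (if j = k then 1 else 0)"
    and coord: "\<forall>j<N. r j \<bullet> v0 \<noteq> 0"
    and w: "w = (r 0 \<bullet> v0) *\<^sub>R us!0 + (r 1 \<bullet> v0) *\<^sub>R us!1"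
    and i: "i \<le> N"
  shows "f (lines (omit i (v0 # us @ [w]))) = 0"
proof -
  define c where "c j = r j \<bullet> v0" for j
  have rw: "r j \<bullet> w = (if j = 0 then c 0 else 0) + (if j = 1 then c 1 else 0)" if "j < N" for j
    using dual that three by (simp add: w c_def inner_add_right)
  have "w \<noteq> 0" using extension_vector_nonzero[OF _ dual coord] three w by simp
  then have nz_face: "0 \<notin> set (omit i (v0 # us @ [w]))"
    using nz omit_set_subset by fastforce
  have len_face: "length (omit i (v0 # us @ [w])) = N + 1"
    using len i by (simp add: length_omit)
  have vanish: "f (lines (omit i (v0 # us @ [w]))) = 0"
    if "q \<bullet> p \<noteq> 0" "i \<noteq> 0 \<Longrightarrow> q \<bullet> v0 = 0 \<or> v0 = p"
      "\<And>k. k < N \<Longrightarrow> Suc k \<noteq> i \<Longrightarrow> q \<bullet> us!k = 0 \<or> us!k = p" "q \<bullet> w = 0" for q p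
    using equivariant_vanishes_if_reflection_fixed[OF f len_face nz_face that(1)]
      entries_of_face[OF len, of i "\<lambda>v. q \<bullet> v = 0 \<or> v = p"] that by blast
  consider "i = 0" | "i = 1" | "i = 2" | k where "i = Suc k" "2 \<le> k" "k < N"
    using i by (metis One_nat_def Suc_1 Suc_le_eq Suc_lessI le0 not0_implies_Suc not_less_eq_eq)
  then show ?thesis
  proof cases
    case 1
    show ?thesis
      by (rule vanish[of "r 2" "us!2"]) (use 1 dual three rw in auto)
  next
    case 2
    show ?thesis
      by (rule vanish[of "c 0 *\<^sub>R r 1 - c 1 *\<^sub>R r 0" "us!1"])
        (use 2 dual three rw coord in \<open>auto simp: inner_diff_left c_def\<close>)
  next
    case 3
    show ?thesis
      by (rule vanish[of "c 1 *\<^sub>R r 0 - c 0 *\<^sub>R r 1" "us!0"])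
        (use 3 dual three rw coord in \<open>auto simp: inner_diff_left c_def\<close>)
  next
    case (4 k)
    show ?thesis
      by (rule vanish[of "r k" v0]) (use 4 dual rw coord in \<open>auto simp: c_def\<close>)
  qed
qed

text \<open>The main construction: a nonvanishing point of \<open>f\<close> extends to a nonvanishing point of
  \<open>df\<close>, since only the last face of the extension contributes.\<close>

lemma coboundary_of_extension_nonzero:
  fixes us :: "(real^'n) list"
  assumes f: "equivariant_eps (CARD('n) + 1) f" and len: "length us = CARD('n)"
    and three: "3 \<le> CARD('n)"
    and nz: "0 \<notin> set (v0 # us)" and fy: "f (lines (v0 # us)) \<noteq> 0"
  shows "\<exists>w. w \<noteq> 0 \<and> cobound f (lines (v0 # us @ [w])) \<noteq> 0"
proof -
  let ?N = "CARD('n)"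
  have f': "equivariant_eps (Suc (length us)) f" using f len by simp
  obtain r where dual: "\<forall>j<?N. \<forall>k<?N. r j \<bullet> us!k = (if j = k then 1 else 0)"
    using dual_family[OF len nonvanishing_spanning[OF f' nz fy]] by blast
  have coord: "\<forall>j<?N. r j \<bullet> v0 \<noteq> 0"
    using nonvanishing_coordinate[OF f' nz fy] dual len by simp
  define w where "w = (r 0 \<bullet> v0) *\<^sub>R us!0 + (r 1 \<bullet> v0) *\<^sub>R us!1"
  let ?xs = "v0 # us @ [w]"
  have faces: "\<forall>i<?N + 1. f (omit i (lines ?xs)) = 0"
    unfolding omit_map using faces_vanish[OF f len three nz dual coord w_def] by simp
  have "cobound f (lines ?xs) = (-1) ^ (?N + 1) * f (omit (?N + 1) (lines ?xs))"
    by (rule cobound_only_last_face) (use len faces in simp_all)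
  also have "omit (?N + 1) (lines ?xs) = lines (v0 # us)"
    using omit_last[of "lines (v0 # us)" "span {w}"] len by simp
  finally have "cobound f (lines ?xs) = (-1) ^ (?N + 1) * f (lines (v0 # us))" .
  moreover have "w \<noteq> 0"
    using extension_vector_nonzero[OF _ dual coord] three by (simp add: w_def)
  ultimately show ?thesis using fy by auto
qed

theorem proposition3p2:
  fixes f :: "(real^'n) set list \<Rightarrow> real"
  assumes "even CARD('n)" and "CARD('n) \<ge> 4"
    and "equivariant_eps (CARD('n) + 1) f"
    and "\<exists>xs\<in>proj_tuples (CARD('n) + 1). f xs \<noteq> 0"
  shows "\<exists>xs\<in>proj_tuples (CARD('n) + 2). cobound f xs \<noteq> 0"
proof -
  obtain y where y: "y \<in> proj_tuples (CARD('n) + 1)" and fy: "f y \<noteq> 0"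
    using assms(4) by blast
  obtain vs where vs: "y = lines vs" "length vs = CARD('n) + 1" "0 \<notin> set vs"
    using proj_tuples_lines[OF y] by blast
  then obtain v0 us where "vs = v0 # us" "length us = CARD('n)"
    by (cases vs) auto
  then obtain w where "w \<noteq> 0" "cobound f (lines (v0 # us @ [w])) \<noteq> 0"
    using coboundary_of_extension_nonzero[OF assms(3)] assms(2) vs fy by auto
  moreover have "lines (v0 # us @ [w]) \<in> proj_tuples (CARD('n) + 2)"
    using \<open>w \<noteq> 0\<close> \<open>length us = CARD('n)\<close> vs \<open>vs = v0 # us\<close>
    by (intro lines_in_proj_tuples) auto
  ultimately show ?thesis by blast
qed

end
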